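(* Let $\mathcal{D}$ be a set of routing problem instances, and for each $\mathcal{P}\in\mathcal{D}$ let $C=C(\mathcal{P})\subseteq\Pi$ be its (finite, nonempty) feasible set, $f(\cdot;\mathcal{P})$ its objective, $f^*(\mathcal{P})=\min_{\pi\in C}f(\pi;\mathcal{P})$, $\Pi^*=\Pi^*(\mathcal{P})$ its set of optimal solutions, and $q_\lambda(\cdot;\mathcal{P})$ the constrained Gibbs distribution defined in the context. Suppose that for a parameterized family of distributions $\{p_\theta(\cdot;\mathcal{P})\}_\theta$ on $\Pi$ the approximation error $\delta(\lambda):=\min_\theta\max_{\mathcal{P}\in\mathcal{D}}\mathrm{KL}(p_\theta(\cdot;\mathcal{P})\,\|\,q_\lambda(\cdot;\mathcal{P}))$ satisfies $\delta(\lambda)\le c/\lambda$ for all $\lambda>0$, for some constant $c$, and let $\theta^*(\lambda)$ be a minimizer attaining $\delta(\lambda)$. Define $\Delta(\mathcal{P}):=\min_{\pi\in C\setminus\Pi^*}f(\pi;\mathcal{P})-f^*(\mathcal{P})$. Then for any $\mathcal{P}\in\mathcal{D}$, any $\epsilon>0$ and any $\lambda$ with $\Delta(\mathcal{P})\ge\lambda>0$, $$\mathbb{P}_{\pi\sim p_{\theta^*(\lambda)}(\cdot;\mathcal{P})}\big(f(\pi;\mathcal{P})\ge f^*(\mathcal{P})+\epsilon\big)\le \frac{|C|\,\Delta(\mathcal{P})\,e^{-\Delta(\mathcal{P})/\lambda}}{|\Pi^*|\max\{\epsilon,\Delta(\mathcal{P})\}}+\sqrt{\frac{c}{2\lamb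da}}.$$
   Context: Routes are elements of the finite set $\Pi=V^T$ with $V=\{0,1,\dots,n\}$. For an instance $\mathcal{P}$, the feasible set is $C=\{\pi\in\Pi: c(\pi;\mathcal{P})\le 0,\ d(\pi;\mathcal{P})=0\}$ for constraint functions $c,d$. The constrained Gibbs distribution with temperature $\lambda>0$ is $q_\lambda(\pi;\mathcal{P})=\frac{1}{Z_\lambda}\exp\!\big(-\frac{f(\pi;\mathcal{P})-f^*(\mathcal{P})}{\lambda}\big)\mathbf{1}_C(\pi)$, where $Z_\lambda=\sum_{\pi\in C}\exp(-(f(\pi;\mathcal{P})-f^*(\mathcal{P}))/\lambda)$. For distributions $P,Q$ on a finite set with $\mathrm{supp}(P)\subseteq\mathrm{supp}(Q)$, $\mathrm{KL}(P\|Q)=\mathbb{E}_{x\sim P}[\log(P(x)/Q(x))]$. *)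

theory Defs
  imports Complex_Main "HOL-Library.Extended_Real"
begin

text \<open>Routes: elements of V^T with V = {0..n}, represented as lists of length T.\<close>
definition routes :: "nat \<Rightarrow> nat \<Rightarrow> nat list set" where
  "routes n T = {xs. length xs = T \<and> set xs \<subseteq> {0..n}}"

definition fstar :: "('r \<Rightarrow> real) \<Rightarrow> 'r set \<Rightarrow> real" where
  "fstar f C = Min (f ` C)"

definition optset :: "('r \<Rightarrow> real) \<Rightarrow> 'r set \<Rightarrow> 'r set" where
  "optset f C = {x \<in> C. f x = fstar f C}"

definition gap :: "('r \<Rightarrow> real) \<Rightarrow> 'r set \<Rightarrow> real" where
  "gap f C = Min (f ` (C - optset f C)) - fstar f C"

definition gibbs :: "real \<Rightarrow> ('r \<Rightarrow> real) \<Rightarrow> 'r set \<Rightarrow> 'r \<Rightarrow> real" where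
  "gibbs lam f C x =
     (if x \<in> C then exp (- (f x - fstar f C) / lam) /
        (\<Sum>y\<in>C. exp (- (f y - fstar f C) / lam)) else 0)"

definition is_distr :: "'r set \<Rightarrow> ('r \<Rightarrow> real) \<Rightarrow> bool" where
  "is_distr S p \<longleftrightarrow> (\<forall>x\<in>S. 0 \<le> p x) \<and> (\<Sum>x\<in>S. p x) = 1"

definition KL :: "'r set \<Rightarrow> ('r \<Rightarrow> real) \<Rightarrow> ('r \<Rightarrow> real) \<Rightarrow> ereal" where
  "KL S P Q =
     (if \<forall>x\<in>S. P x \<noteq> 0 \<longrightarrow> Q x \<noteq> 0
      then ereal (\<Sum>x\<in>{x\<in>S. P x \<noteq> 0}. P x * ln (P x / Q x))
      else \<infinity>)"

end

theory Submission
  imports Defs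
begin

text \<open>
  Coarsening p and q = gibbs \<lambda> to the two cells A = {f \<ge> f* + \<epsilon>}
  and its complement does not increase the KL divergence (log-sum inequality), so the
  binary Pinsker inequality gives p(A) \<le> q(A) + sqrt(KL/2) \<le> q(A) + sqrt(c/(2\<lambda>)).
  Every feasible route in A lies at least m = max \<epsilon> \<Delta> above the optimum, and the
  partition function of q is at least |\<Pi>*|, so q(A) \<le> |C| exp(-m/\<lambda>) / |\<Pi>*|.
  Finally x exp(-x/\<lambda>) decreases for x \<ge> \<lambda>, and m \<ge> \<Delta> \<ge> \<lambda>.
\<close>

lemma four_mult_one_minus_le: "4 * s * (1 - s) \<le> (1::real)"
proof -
  have "0 \<le> (2 * s - 1)\<^sup>2" by simp
  thus ?thesis by (simp add: power2_eq_square algebra_simps)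
qed

lemma two_square_le_neg_ln_one_minus:
  fixes t :: real
  assumes "0 \<le> t" "t < 1"
  shows "2 * t\<^sup>2 \<le> - ln (1 - t)"
proof -
  let ?k = "\<lambda>s::real. - ln (1 - s) - 2 * s\<^sup>2"
  have "?k 0 \<le> ?k t"
  proof (rule DERIV_nonneg_imp_nondecreasing[OF assms(1)])
    fix x :: real
    assume "0 \<le> x" "x \<le> t"
    hence x: "x < 1" using assms by simp
    have "DERIV ?k x :> 1 / (1 - x) - 4 * x"
      by (rule derivative_eq_intros refl | use x in simp)+
    moreover have "4 * x \<le> 1 / (1 - x)"
      using four_mult_one_minus_le[of x] x by (simp add: field_simps)
    ultimately show "\<exists>y. DERIV ?k x :> y \<and> y \<ge> 0" by force
  qed
  thus ?thesis by simp
qed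

lemma binary_pinsker_interior:
  fixes a t :: real
  assumes a: "0 < a" "a < 1" and t: "0 < t" "t < 1"
  shows "2 * (a - t)\<^sup>2 \<le> a * ln (a / t) + (1 - a) * ln ((1 - a) / (1 - t))"
proof -
  let ?H = "\<lambda>s::real. - a * ln s - (1 - a) * ln (1 - s) - 2 * (a - s)\<^sup>2"
  have deriv: "DERIV ?H s :> (s - a) * (1 / (s * (1 - s)) - 4)" if s: "0 < s" "s < 1" for s
  proof -
    have "DERIV ?H s :> - a * (1 / s) - (1 - a) * (- 1 / (1 - s)) - 2 * (2 * (a - s) * (- 1))"
      by (rule derivative_eq_intros refl | use s in simp)+
    thus ?thesis using s by (simp add: field_simps)
  qed
  have four_le: "4 \<le> 1 / (s * (1 - s))" if s: "0 < s" "s < 1" for s :: real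
    using four_mult_one_minus_le[of s] s by (simp add: field_simps)
  \<comment> \<open>?H decreases on (0, a] and increases on [a, 1), so it is minimal at a\<close>
  have "?H a \<le> ?H t"
  proof (cases "a \<le> t")
    case True
    show ?thesis
    proof (rule DERIV_nonneg_imp_nondecreasing[OF True])
      fix x assume "a \<le> x" "x \<le> t"
      thus "\<exists>y. DERIV ?H x :> y \<and> y \<ge> 0"
        using deriv[of x] four_le[of x] a t by force
    qed
  next
    case False
    show ?thesis
    proof (rule DERIV_nonpos_imp_nonincreasing[of t a ?H])
      show "t \<le> a" using False by simp
    next
      fix x assume "t \<le> x" "x \<le> a"
      thus "\<exists>y. DERIV ?H x :> y \<and> y \<le> 0"
        using deriv[of x] four_le[of x] a t by (force simp: mult_nonpos_nonneg)
    qed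
  qed
  thus ?thesis using a t by (simp add: ln_div algebra_simps)
qed

lemma binary_pinsker:
  fixes a b :: real
  assumes "0 \<le> a" "a \<le> 1" "0 \<le> b" "b \<le> 1"
    and "a > 0 \<Longrightarrow> b > 0" "a < 1 \<Longrightarrow> b < 1"
  shows "2 * (a - b)\<^sup>2 \<le> a * ln (a / b) + (1 - a) * ln ((1 - a) / (1 - b))"
proof -
  consider "a = 0" | "a = 1" | "0 < a \<and> a < 1" using assms by linarith
  thus ?thesis
  proof cases
    case 1
    thus ?thesis using two_square_le_neg_ln_one_minus[of b] assms by (simp add: ln_div)
  next
    case 2
    hence "2 * (1 - b)\<^sup>2 \<le> - ln (1 - (1 - b))"
      using two_square_le_neg_ln_one_minus[of "1 - b"] assms by simp
    thus ?thesis using 2 assms by (simp add: ln_div power2_commute)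
  next
    case 3
    thus ?thesis using binary_pinsker_interior[of a b] assms by simp
  qed
qed

lemma log_sum_inequality:
  fixes p q :: "'a \<Rightarrow> real"
  assumes fin: "finite B"
    and p_nn: "\<And>x. x \<in> B \<Longrightarrow> 0 \<le> p x" and q_nn: "\<And>x. x \<in> B \<Longrightarrow> 0 \<le> q x"
    and supp: "\<And>x. x \<in> B \<Longrightarrow> p x \<noteq> 0 \<Longrightarrow> q x \<noteq> 0"
  shows "sum p B * ln (sum p B / sum q B) \<le> (\<Sum>x\<in>{x\<in>B. p x \<noteq> 0}. p x * ln (p x / q x))"
proof -
  define a where "a = sum p B"
  define b where "b = sum q B"
  let ?B = "{x\<in>B. p x \<noteq> 0}"
  have a_supp: "a = sum p ?B" unfolding a_def using fin by (intro sum.mono_neutral_right) auto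
  have b_supp: "sum q ?B \<le> b" unfolding b_def using fin q_nn by (intro sum_mono2) auto
  show ?thesis
  proof (cases "?B = {}")
    case True
    thus ?thesis using a_supp a_def by simp
  next
    case False
    then obtain x0 where x0: "x0 \<in> B" "p x0 \<noteq> 0" by auto
    have a_pos: "0 < a" unfolding a_supp using fin False p_nn by (intro sum_pos) force+
    have "0 < q x0" using x0 q_nn supp by force
    moreover have "q x0 \<le> b" unfolding b_def using fin x0 q_nn by (intro member_le_sum) auto
    ultimately have b_pos: "0 < b" by simp
    \<comment> \<open>termwise, ln u \<ge> 1 - 1/u with u = (p x / q x) / (a / b)\<close>
    have termwise: "p x - q x * a / b \<le> p x * ln (p x / q x) - p x * ln (a / b)" if x: "x \<in> ?B" for x
    proof -
      have px: "0 < p x" and qx: "0 < q x" using x p_nn q_nn supp by force+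
      define u where "u = p x * b / (q x * a)"
      have u_pos: "0 < u" unfolding u_def using px qx a_pos b_pos by simp
      have "ln (1 / u) \<le> 1 / u - 1" using u_pos by (intro ln_le_minus_one) simp
      hence "p x * (1 - 1 / u) \<le> p x * ln u" using px u_pos by (intro mult_left_mono) (auto simp: ln_div)
      moreover have "ln u = ln (p x / q x) - ln (a / b)"
        unfolding u_def using px qx a_pos b_pos by (simp add: ln_div ln_mult)
      moreover have "p x * (1 - 1 / u) = p x - q x * a / b"
        unfolding u_def using px qx a_pos b_pos by (simp add: field_simps)
      ultimately show ?thesis by (simp add: algebra_simps)
    qed
    have "(\<Sum>x\<in>?B. p x - q x * a / b) \<le> (\<Sum>x\<in>?B. p x * ln (p x / q x) - p x * ln (a / b))"
      by (rule sum_mono) (rule termwise)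
    hence "a - sum q ?B * a / b \<le> (\<Sum>x\<in>?B. p x * ln (p x / q x)) - a * ln (a / b)"
      by (simp add: sum_subtractf sum_divide_distrib[symmetric] sum_distrib_right[symmetric] a_supp)
    moreover have "sum q ?B * a / b \<le> a" using b_supp a_pos b_pos by (simp add: field_simps)
    ultimately have "a * ln (a / b) \<le> (\<Sum>x\<in>?B. p x * ln (p x / q x))" by linarith
    thus ?thesis unfolding a_def b_def .
  qed
qed

lemma KL_event_pinsker:
  assumes fin: "finite S" and P: "is_distr S P" and Q: "is_distr S Q" and "A \<subseteq> S"
    and KL_le: "KL S P Q \<le> ereal K"
  shows "sum P A - sum Q A \<le> sqrt (K / 2)"
proof -
  have P_nn: "\<And>x. x \<in> S \<Longrightarrow> 0 \<le> P x" and Q_nn: "\<And>x. x \<in> S \<Longrightarrow> 0 \<le> Q x"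
    using P Q unfolding is_distr_def by auto
  have supp: "\<And>x. x \<in> S \<Longrightarrow> P x \<noteq> 0 \<Longrightarrow> Q x \<noteq> 0"
    using KL_le unfolding KL_def by (auto split: if_splits)
  let ?kl = "\<lambda>B. \<Sum>x\<in>{x\<in>B. P x \<noteq> 0}. P x * ln (P x / Q x)"
  have split: "?kl S = ?kl A + ?kl (S - A)"
    using fin \<open>A \<subseteq> S\<close>
    by (subst sum.union_disjoint[symmetric]) (auto intro: finite_subset intro!: sum.cong)
  have kl_le: "?kl S \<le> K" using KL_le supp unfolding KL_def by simp
  have compl: "sum P (S - A) = 1 - sum P A" "sum Q (S - A) = 1 - sum Q A"
    using P Q fin \<open>A \<subseteq> S\<close> unfolding is_distr_def by (simp_all add: sum_diff)
  have mass_nn: "0 \<le> sum P B" "0 \<le> sum Q B" if "B \<subseteq> S" for B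
    using that P_nn Q_nn by (auto intro: sum_nonneg)
  have mass_pos: "0 < sum Q B" if B: "B \<subseteq> S" "0 < sum P B" for B
  proof -
    obtain x where x: "x \<in> B" "P x \<noteq> 0" using B(2) sum.not_neutral_contains_not_neutral by force
    have "0 < Q x" using x B supp Q_nn by force
    moreover have "Q x \<le> sum Q B"
      using B fin x Q_nn by (intro member_le_sum) (auto intro: finite_subset)
    ultimately show ?thesis by simp
  qed
  have "2 * (sum P A - sum Q A)\<^sup>2
      \<le> sum P A * ln (sum P A / sum Q A) + (1 - sum P A) * ln ((1 - sum P A) / (1 - sum Q A))"
    using mass_nn[of A] mass_nn[of "S - A"] mass_pos[of A] mass_pos[of "S - A"] \<open>A \<subseteq> S\<close>
    by (intro binary_pinsker) (auto simp: compl)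
  also have "\<dots> \<le> ?kl A + ?kl (S - A)"
    using log_sum_inequality[of A P Q] log_sum_inequality[of "S - A" P Q]
      fin \<open>A \<subseteq> S\<close> P_nn Q_nn supp by (auto simp: compl intro!: add_mono finite_subset)
  finally have "(sum P A - sum Q A)\<^sup>2 \<le> K / 2" using split kl_le by simp
  thus ?thesis using real_le_rsqrt by blast
qed

lemma mult_exp_neg_divide_antimono:
  fixes l x y :: real
  assumes "0 < l" "l \<le> x" "x \<le> y"
  shows "y * exp (- y / l) \<le> x * exp (- x / l)"
proof -
  have x: "0 < x" using assms by simp
  have "y / x = 1 + (y - x) / x" using x by (simp add: field_simps)
  also have "\<dots> \<le> exp ((y - x) / x)" by (rule exp_ge_add_one_self)
  also have "\<dots> \<le> exp ((y - x) / l)" using assms x by (simp add: divide_left_mono)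
  finally have "y \<le> x * exp ((y - x) / l)" using x by (simp add: field_simps)
  hence "y * exp (- y / l) \<le> x * exp ((y - x) / l) * exp (- y / l)" by (intro mult_right_mono) auto
  also have "\<dots> = x * exp (- x / l)" by (simp add: mult.assoc exp_add[symmetric] diff_divide_distrib)
  finally show ?thesis .
qed

lemma finite_routes: "finite (routes n T)"
  unfolding routes_def using finite_lists_length_eq[of "{0..n}" T] by (simp add: conj_commute)

lemma card_optset_pos:
  assumes "finite C" "C \<noteq> {}"
  shows "0 < card (optset f C)"
proof -
  have "fstar f C \<in> f ` C" unfolding fstar_def using assms by simp
  hence "optset f C \<noteq> {}" unfolding optset_def by auto
  thus ?thesis using assms(1) by (simp add: card_gt_0_iff optset_def)
qed

lemma gap_le:
  assumes "finite C" "x \<in> C - optset f C"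
  shows "fstar f C + gap f C \<le> f x"
  using assms unfolding gap_def by (simp add: Min_le)

lemma card_optset_le_gibbs_partition:
  assumes "finite C"
  shows "real (card (optset f C)) \<le> (\<Sum>y\<in>C. exp (- (f y - fstar f C) / lam))"
proof -
  have "real (card (optset f C)) = (\<Sum>y\<in>optset f C. exp (- (f y - fstar f C) / lam))"
    unfolding optset_def by simp
  also have "\<dots> \<le> (\<Sum>y\<in>C. exp (- (f y - fstar f C) / lam))"
    using assms by (intro sum_mono2) (auto simp: optset_def)
  finally show ?thesis .
qed

lemma is_distr_gibbs:
  assumes "finite S" "C \<subseteq> S" "C \<noteq> {}"
  shows "is_distr S (gibbs lam f C)"
proof -
  let ?Z = "\<Sum>y\<in>C. exp (- (f y - fstar f C) / lam)"
  have "0 < ?Z" using assms finite_subset by (intro sum_pos) auto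
  hence Z: "0 < ?Z" "?Z \<noteq> 0" by simp_all
  have "sum (gibbs lam f C) S = sum (gibbs lam f C) C"
    using assms by (intro sum.mono_neutral_right) (auto simp: gibbs_def)
  also have "\<dots> = 1" using Z by (simp add: gibbs_def sum_divide_distrib[symmetric])
  finally show ?thesis using Z unfolding is_distr_def by (simp add: gibbs_def)
qed

lemma gibbs_le_of_gap:
  assumes "finite C" "x \<in> C" "0 < lam" "m \<le> f x - fstar f C"
  shows "gibbs lam f C x \<le> exp (- m / lam) / real (card (optset f C))"
proof -
  let ?Z = "\<Sum>y\<in>C. exp (- (f y - fstar f C) / lam)"
  have "m / lam \<le> (f x - fstar f C) / lam" using assms by (simp add: divide_right_mono)
  hence "exp (- (f x - fstar f C) / lam) \<le> exp (- m / lam)"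
    unfolding minus_divide_left[symmetric] exp_le_cancel_iff neg_le_iff_le .
  moreover have "real (card (optset f C)) \<le> ?Z" using card_optset_le_gibbs_partition[OF assms(1)] .
  moreover have "C \<noteq> {}" using assms(2) by blast
  hence "0 < real (card (optset f C))" using card_optset_pos[OF assms(1)] by simp
  ultimately show ?thesis using assms(2) by (simp add: gibbs_def frac_le)
qed

lemma gibbs_upper_tail_le:
  assumes fin: "finite S" "finite C" and nonopt: "C - optset f C \<noteq> {}"
    and "0 < eps" "0 < lam" "lam \<le> gap f C"
  shows "(\<Sum>x\<in>{x\<in>S. fstar f C + eps \<le> f x}. gibbs lam f C x)
    \<le> real (card C) * gap f C * exp (- gap f C / lam)
        / (real (card (optset f C)) * max eps (gap f C))"
proof -
  have "C \<noteq> {}" using nonopt by blast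
  define A where "A = {x\<in>S. fstar f C + eps \<le> f x}"
  define m where "m = max eps (gap f C)"
  define E where "E = exp (- m / lam) / real (card (optset f C))"
  have m_le: "m \<le> f x - fstar f C" if "x \<in> A \<inter> C" for x
  proof -
    have "x \<notin> optset f C" using that \<open>0 < eps\<close> unfolding A_def optset_def by auto
    thus ?thesis using that gap_le[OF fin(2)] unfolding A_def m_def by force
  qed
  have "sum (gibbs lam f C) A = sum (gibbs lam f C) (A \<inter> C)"
    unfolding A_def using fin by (intro sum.mono_neutral_right) (auto simp: gibbs_def)
  also have "\<dots> \<le> sum (\<lambda>_. E) (A \<inter> C)"
    using gibbs_le_of_gap[OF fin(2) _ \<open>0 < lam\<close> m_le] unfolding E_def by (intro sum_mono) auto
  also have "\<dots> = real (card (A \<inter> C)) * E" by simp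
  also have "\<dots> \<le> real (card C) * E"
    using fin by (intro mult_right_mono) (auto simp: E_def card_mono)
  also have "\<dots> \<le> real (card C) * gap f C * exp (- gap f C / lam) / (real (card (optset f C)) * m)"
  proof -
    have "m * exp (- m / lam) \<le> gap f C * exp (- gap f C / lam)"
      using mult_exp_neg_divide_antimono assms unfolding m_def by simp
    hence "real (card C) * (m * exp (- m / lam)) \<le> real (card C) * (gap f C * exp (- gap f C / lam))"
      by (rule mult_left_mono) simp
    moreover have "0 < m" "0 < real (card (optset f C))"
      using assms card_optset_pos[OF fin(2) \<open>C \<noteq> {}\<close>] unfolding m_def by auto
    ultimately show ?thesis unfolding E_def by (simp add: field_simps)
  qed
  finally show ?thesis unfolding A_def m_def .
qed

theorem theorem4p3:
  fixes n T :: nat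
    and D :: "'inst set"
    and C :: "'inst \<Rightarrow> nat list set"
    and f :: "nat list \<Rightarrow> 'inst \<Rightarrow> real"
    and p :: "'th \<Rightarrow> 'inst \<Rightarrow> nat list \<Rightarrow> real"
    and c :: real
    and thetastar :: "real \<Rightarrow> 'th"
    and P :: 'inst and eps lam :: real
  assumes C_sub: "\<And>Q. Q \<in> D \<Longrightarrow> C Q \<subseteq> routes n T"
    and C_ne: "\<And>Q. Q \<in> D \<Longrightarrow> C Q \<noteq> {}"
    and p_distr: "\<And>th Q. Q \<in> D \<Longrightarrow> is_distr (routes n T) (p th Q)"
    and delta_bound: "\<And>l. l > 0 \<Longrightarrow>
        (INF th. SUP Q\<in>D. KL (routes n T) (p th Q) (gibbs l (\<lambda>x. f x Q) (C Q))) \<le> ereal (c / l)"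
    and thetastar_min: "\<And>l. l > 0 \<Longrightarrow>
        (SUP Q\<in>D. KL (routes n T) (p (thetastar l) Q) (gibbs l (\<lambda>x. f x Q) (C Q)))
        = (INF th. SUP Q\<in>D. KL (routes n T) (p th Q) (gibbs l (\<lambda>x. f x Q) (C Q)))"
    and P_in: "P \<in> D"
    and nonopt_ne: "C P - optset (\<lambda>x. f x P) (C P) \<noteq> {}"
    and eps_pos: "eps > 0"
    and lam_pos: "lam > 0"
    and lam_le: "lam \<le> gap (\<lambda>x. f x P) (C P)"
  shows "(\<Sum>x\<in>{x \<in> routes n T. f x P \<ge> fstar (\<lambda>x. f x P) (C P) + eps}. p (thetastar lam) P x)
     \<le> real (card (C P)) * gap (\<lambda>x. f x P) (C P) * exp (- gap (\<lambda>x. f x P) (C P) / lam)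
         / (real (card (optset (\<lambda>x. f x P) (C P))) * max eps (gap (\<lambda>x. f x P) (C P)))
       + sqrt (c / (2 * lam))"
proof -
  let ?S = "routes n T" and ?q = "gibbs lam (\<lambda>x. f x P) (C P)"
  let ?A = "{x \<in> ?S. f x P \<ge> fstar (\<lambda>x. f x P) (C P) + eps}"
  have "KL ?S (p (thetastar lam) P) ?q
      \<le> (SUP Q\<in>D. KL ?S (p (thetastar lam) Q) (gibbs lam (\<lambda>x. f x Q) (C Q)))"
    using P_in by (intro SUP_upper)
  also have "\<dots> \<le> ereal (c / lam)" using thetastar_min[OF lam_pos] delta_bound[OF lam_pos] by simp
  finally have KL_le: "KL ?S (p (thetastar lam) P) ?q \<le> ereal (c / lam)" .
  have "sum (p (thetastar lam) P) ?A - sum ?q ?A \<le> sqrt (c / lam / 2)"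
    using is_distr_gibbs[OF finite_routes C_sub C_ne] P_in
    by (intro KL_event_pinsker[OF finite_routes p_distr _ _ KL_le]) auto
  moreover have "finite (C P)" using C_sub[OF P_in] finite_routes finite_subset by blast
  note gibbs_upper_tail_le[OF finite_routes[of n T] this nonopt_ne eps_pos lam_pos lam_le]
  ultimately show ?thesis by (simp add: mult.commute)
qed

end
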